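(* Let $C$ be a $d$-copula and let $C_1,\ldots,C_d$ be $2$-copulas such that the tail dependence functions $\Lambda_{C_i}:=\Lambda(\cdot;C_i)$ and $\Lambda(\cdot;\phi_C(C_1,\ldots,C_d))$ exist. Suppose that for all $w_i\in\mathbb{R}_+$ and almost all $t\in\mathbb{R}_+$, $$\lim_{s\searrow0}\partial_1C_i(st,sw_i)=\partial_1\Lambda_{C_i}(t,w_i)\quad\text{for all }i=1,\ldots,d.$$ Then $\phi_C(\Lambda_{C_1},\ldots,\Lambda_{C_d})(\mathbf{w})\le\Lambda(\mathbf{w};\phi_C(C_1,\ldots,C_d))$ for all $\mathbf{w}\in\mathbb{R}_+^d$. If, additionally, there is $\ell\in\{1,\ldots,d\}$ and a family $(g_w)_{w\in[0,1]}$ of integrable functions on $\mathbb{R}_+$ such that $\partial_1C_\ell(s\tau,sw_\ell)\mathbf{1}_{[0,1/s]}(\tau)\le g_{w_\ell}(\tau)$ for all $w_\ell\in[0,1]$ (and all $s\in(0,1]$, $\tau\ge0$), then $\phi_C(\Lambda_{C_1},\ldots,\Lambda_{C_d})(\mathbf{w})=\Lambda(\mathbf{w};\phi_C(C_1,\ldots,C_d))$.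
   Context: A $d$-copula is a distribution function on $[0,1]^d$ with uniform margins. The tail dependence function of a $d$-copula $D$ is $\Lambda(\mathbf{w};D):=\lim_{s\searrow0}D(s\mathbf{w})/s$ for $\mathbf{w}\in\mathbb{R}_+^d$, $\mathbb{R}_+=[0,\infty)$, when the limit exists for all $\mathbf{w}$. For $2$-copulas $C_1,\ldots,C_d$, $\phi_C(C_1,\ldots,C_d)(v_1,\ldots,v_d):=\int_0^1C(\partial_1C_1(t,v_1),\ldots,\partial_1C_d(t,v_d))\,dt$ (a $d$-copula). For bivariate tail dependence functions $\Lambda_1,\ldots,\Lambda_d$, $\phi_C(\Lambda_1,\ldots,\Lambda_d)(w_1,\ldots,w_d):=\int_0^\infty C(\partial_1\Lambda_1(t,w_1),\ldots,\partial_1\Lambda_d(t,w_d))\,dt$. Partial derivatives are defined almost everywhere. *)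

theory Defs
  imports "HOL-Analysis.Analysis"
begin

text \<open>Copulas are represented as real-valued functions on all of R^d, extended from
[0,1]^d by clamping each coordinate to [0,1] (i.e. viewed as the distribution function
on R^d of a distribution on [0,1]^d).\<close>

definition clamp01 :: "real \<Rightarrow> real" where
  "clamp01 x = max 0 (min 1 x)"

definition is_copula :: "(('d::finite \<Rightarrow> real) \<Rightarrow> real) \<Rightarrow> bool" where
  "is_copula C \<longleftrightarrow>
     (\<forall>u. C u = C (\<lambda>i. clamp01 (u i))) \<and>
     (\<forall>u. (\<forall>i. 0 \<le> u i \<and> u i \<le> 1) \<longrightarrow> (\<exists>i. u i = 0) \<longrightarrow> C u = 0) \<and>
     (\<forall>i x. 0 \<le> x \<and> x \<le> 1 \<longrightarrow> C ((\<lambda>_. 1)(i := x)) = x) \<and>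
     (\<forall>a b. (\<forall>i. 0 \<le> a i \<and> a i \<le> b i \<and> b i \<le> 1) \<longrightarrow>
        0 \<le> (\<Sum>S\<in>Pow (UNIV :: 'd set). (-1) ^ card S * C (\<lambda>i. if i \<in> S then a i else b i)))"

definition is_copula2 :: "(real \<Rightarrow> real \<Rightarrow> real) \<Rightarrow> bool" where
  "is_copula2 C \<longleftrightarrow>
     (\<forall>u v. C u v = C (clamp01 u) (clamp01 v)) \<and>
     (\<forall>x. 0 \<le> x \<and> x \<le> 1 \<longrightarrow> C 0 x = 0 \<and> C x 0 = 0 \<and> C x 1 = x \<and> C 1 x = x) \<and>
     (\<forall>a1 a2 b1 b2. 0 \<le> a1 \<and> a1 \<le> b1 \<and> b1 \<le> 1 \<and> 0 \<le> a2 \<and> a2 \<le> b2 \<and> b2 \<le> 1 \<longrightarrow>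
        0 \<le> C b1 b2 - C a1 b2 - C b1 a2 + C a1 a2)"

text \<open>Partial derivative in the first argument; set to 0 where it does not exist
(only its almost-everywhere values matter).\<close>
definition partial1 :: "(real \<Rightarrow> real \<Rightarrow> real) \<Rightarrow> real \<Rightarrow> real \<Rightarrow> real" where
  "partial1 f t v = (if (\<lambda>x. f x v) differentiable (at t) then deriv (\<lambda>x. f x v) t else 0)"

definition is_tdf :: "(('d::finite \<Rightarrow> real) \<Rightarrow> real) \<Rightarrow> (('d \<Rightarrow> real) \<Rightarrow> real) \<Rightarrow> bool" where
  "is_tdf D L \<longleftrightarrow> (\<forall>w. (\<forall>i. 0 \<le> w i) \<longrightarrow>
      ((\<lambda>s. D (\<lambda>i. s * w i) / s) \<longlongrightarrow> L w) (at_right 0))"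

definition is_tdf2 :: "(real \<Rightarrow> real \<Rightarrow> real) \<Rightarrow> (real \<Rightarrow> real \<Rightarrow> real) \<Rightarrow> bool" where
  "is_tdf2 D L \<longleftrightarrow> (\<forall>w1 w2. 0 \<le> w1 \<longrightarrow> 0 \<le> w2 \<longrightarrow>
      ((\<lambda>s. D (s * w1) (s * w2) / s) \<longlongrightarrow> L w1 w2) (at_right 0))"

definition phiC :: "(('d::finite \<Rightarrow> real) \<Rightarrow> real) \<Rightarrow> ('d \<Rightarrow> real \<Rightarrow> real \<Rightarrow> real)
    \<Rightarrow> ('d \<Rightarrow> real) \<Rightarrow> real" where
  "phiC C Cs v = (LINT t:{0..1}|lborel. C (\<lambda>i. partial1 (Cs i) t (v i)))"

definition phiL :: "(('d::finite \<Rightarrow> real) \<Rightarrow> real) \<Rightarrow> ('d \<Rightarrow> real \<Rightarrow> real \<Rightarrow> real)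
    \<Rightarrow> ('d \<Rightarrow> real) \<Rightarrow> ennreal" where
  "phiL C Ls w = (\<integral>\<^sup>+ t. ennreal (C (\<lambda>i. partial1 (Ls i) t (w i))) * indicator {0..} t \<partial>lborel)"

end

(*
  Substituting t = s * tau turns phi_C(C_1,...,C_d)(s w) / s into the integral over tau >= 0 of
  1_[0,1](s tau) * C(d1 C_1(s tau, s w_1), ..., d1 C_d(s tau, s w_d)), whose limit as s -> 0+ is
  Lambda(w; phi_C(C_1,...,C_d)). A copula is Lipschitz, hence continuous, so by the convergence
  hypothesis these integrands tend a.e. to the integrand of phi_C(Lambda_1,...,Lambda_d)(w), and
  Fatou's lemma gives the inequality. Since C(u) <= u_l, the integrands are dominated by
  d1 C_l(s tau, s w_l) on [0, 1/s], hence by a rescaled g, and dominated convergence gives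
  equality.

  The integrands are Borel measurable because t -> C_i(t, v) is continuous: differentiability at t
  is then a Cauchy condition on difference quotients that only needs to be checked at rational
  increments.
*)

theory Submission
  imports Defs
begin

section \<open>Lipschitz continuity of copulas\<close>

lemma is_copula_clamp: "is_copula C \<Longrightarrow> C u = C (\<lambda>i. clamp01 (u i))"
  unfolding is_copula_def by blast

lemma is_copula_grounded:
  "is_copula C \<Longrightarrow> (\<And>k. 0 \<le> u k \<and> u k \<le> 1) \<Longrightarrow> u i = 0 \<Longrightarrow> C u = 0"
  unfolding is_copula_def by blast

definition copula_vol ::
    "(('d::finite \<Rightarrow> real) \<Rightarrow> real) \<Rightarrow> ('d \<Rightarrow> real) \<Rightarrow> ('d \<Rightarrow> real) \<Rightarrow> real"
  where "copula_vol C a b = (\<Sum>S\<in>Pow UNIV. (-1) ^ card S * C (\<lambda>i. if i \<in> S then a i else b i))"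

lemma copula_vol_nonneg:
  "is_copula C \<Longrightarrow> (\<And>i. 0 \<le> a i \<and> a i \<le> b i \<and> b i \<le> 1) \<Longrightarrow> 0 \<le> copula_vol C a b"
  unfolding is_copula_def copula_vol_def by blast

lemma copula_vol_eq_sum_Pow:
  fixes C :: "('d::finite \<Rightarrow> real) \<Rightarrow> real"
  assumes C: "is_copula C" and ab: "\<And>i. 0 \<le> a i \<and> a i \<le> b i \<and> b i \<le> 1"
    and zero: "\<And>k. k \<notin> J \<Longrightarrow> a k = 0"
  shows "copula_vol C a b = (\<Sum>S\<in>Pow J. (-1) ^ card S * C (\<lambda>i. if i \<in> S then a i else b i))"
proof -
  have "C (\<lambda>i. if i \<in> S then a i else b i) = 0" if "S \<notin> Pow J" for S
  proof -
    obtain k where "k \<in> S" "k \<notin> J" using \<open>S \<notin> Pow J\<close> by auto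
    moreover have "0 \<le> a i" "a i \<le> 1" "0 \<le> b i" "b i \<le> 1" for i
      using ab[of i] by auto
    ultimately show ?thesis
      by (intro is_copula_grounded[OF C, of _ k]) (use zero in auto)
  qed
  then show ?thesis
    unfolding copula_vol_def by (intro sum.mono_neutral_right) auto
qed

lemma copula_mono_coord:
  fixes C :: "('d::finite \<Rightarrow> real) \<Rightarrow> real"
  assumes C: "is_copula C" and u: "\<And>k. 0 \<le> u k \<and> u k \<le> 1"
    and ab: "0 \<le> a" "a \<le> b" "b \<le> 1"
  shows "C (u(i := a)) \<le> C (u(i := b))"
proof -
  have "copula_vol C ((\<lambda>_. 0)(i := a)) (u(i := b)) =
      (\<Sum>S\<in>Pow {i}. (-1) ^ card S * C (\<lambda>k. if k \<in> S then ((\<lambda>_. 0)(i := a)) k else (u(i := b)) k))"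
    by (rule copula_vol_eq_sum_Pow[OF C]) (use u ab in auto)
  also have "\<dots> = C (u(i := b)) - C (u(i := a))"
  proof -
    have "(\<lambda>k. if k \<in> {i} then ((\<lambda>_. 0)(i := a)) k else (u(i := b)) k) = u(i := a)"
      by auto
    moreover have "Pow {i} = {{}, {i}}"
      by auto
    ultimately show ?thesis
      by (simp del: fun_upd_apply)
  qed
  finally show ?thesis
    using copula_vol_nonneg[OF C, of "(\<lambda>_. 0)(i := a)" "u(i := b)"] u ab by auto
qed

lemma copula_increment_mono:
  fixes C :: "('d::finite \<Rightarrow> real) \<Rightarrow> real"
  assumes C: "is_copula C" and u: "\<And>k. 0 \<le> u k \<and> u k \<le> 1"
    and ab: "0 \<le> a" "a \<le> b" "b \<le> 1" and "j \<noteq> i" and c: "u j \<le> c" "c \<le> 1"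
  shows "C (u(i := b)) - C (u(i := a)) \<le> C (u(j := c, i := b)) - C (u(j := c, i := a))"
proof -
  define x where "x = (\<lambda>_. 0::real)(i := a, j := u j)"
  define y where "y = u(j := c, i := b)"
  have "copula_vol C x y = (\<Sum>S\<in>Pow {i, j}. (-1) ^ card S * C (\<lambda>k. if k \<in> S then x k else y k))"
    by (rule copula_vol_eq_sum_Pow[OF C]) (use u ab c \<open>j \<noteq> i\<close> in \<open>auto simp: x_def y_def\<close>)
  also have "\<dots> = C y - C (u(j := c, i := a)) - C (u(i := b)) + C (u(i := a))"
  proof -
    have "Pow {i, j} = {{}, {i}, {j}, {i, j}}"
      by auto
    moreover have "(\<lambda>k. if k \<in> {i} then x k else y k) = u(j := c, i := a)"
      and "(\<lambda>k. if k \<in> {j} then x k else y k) = u(i := b)"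
      and "(\<lambda>k. if k \<in> {i, j} then x k else y k) = u(i := a)"
      using \<open>j \<noteq> i\<close> by (auto simp: x_def y_def)
    ultimately show ?thesis
      using \<open>j \<noteq> i\<close> by (simp add: insert_commute y_def del: fun_upd_apply)
  qed
  moreover have "0 \<le> copula_vol C x y"
    by (rule copula_vol_nonneg[OF C]) (use u ab c \<open>j \<noteq> i\<close> in \<open>force simp: x_def y_def\<close>)
  ultimately show ?thesis
    unfolding y_def by linarith
qed

lemma copula_increment_le:
  fixes C :: "('d::finite \<Rightarrow> real) \<Rightarrow> real"
  assumes C: "is_copula C" and u: "\<And>k. 0 \<le> u k \<and> u k \<le> 1"
    and ab: "0 \<le> a" "a \<le> b" "b \<le> 1"
  shows "C (u(i := b)) - C (u(i := a)) \<le> b - a"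
proof -
  \<comment> \<open>Raising the other coordinates to 1 only enlarges the increment (2-increasingness);
    at the top, the uniform margins give b - a.\<close>
  have raise: "C (u(i := b)) - C (u(i := a)) \<le>
      C ((\<lambda>k. if k \<in> J then 1 else u k)(i := b)) - C ((\<lambda>k. if k \<in> J then 1 else u k)(i := a))"
    if "finite J" for J
    using that
  proof (induction J rule: finite_induct)
    case (insert j J)
    define v where "v = (\<lambda>k. if k \<in> J then 1 else u k)"
    have v: "\<And>k. 0 \<le> v k \<and> v k \<le> 1"
      using u by (auto simp: v_def)
    have "C (v(i := b)) - C (v(i := a)) \<le> C (v(j := 1, i := b)) - C (v(j := 1, i := a))"
      by (cases "j = i") (use copula_increment_mono[where u = v and j = j, OF C v ab] v in auto)
    moreover have "(\<lambda>k. if k \<in> insert j J then 1 else u k) = v(j := 1)"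
      by (auto simp: v_def)
    ultimately show ?case
      using insert.IH unfolding v_def[symmetric] by (simp del: fun_upd_apply)
  qed simp
  have "(\<lambda>k. if k \<in> UNIV then 1 else u k) = (\<lambda>_. 1)"
    by auto
  with raise[of UNIV] have "C (u(i := b)) - C (u(i := a)) \<le> C ((\<lambda>_. 1)(i := b)) - C ((\<lambda>_. 1)(i := a))"
    by simp
  also have "\<dots> = b - a"
    using C ab unfolding is_copula_def by simp
  finally show ?thesis .
qed

lemma copula_lipschitz_coord:
  fixes C :: "('d::finite \<Rightarrow> real) \<Rightarrow> real"
  assumes C: "is_copula C" and u: "\<And>k. 0 \<le> u k \<and> u k \<le> 1" and a: "0 \<le> a" "a \<le> 1"
  shows "\<bar>C u - C (u(i := a))\<bar> \<le> \<bar>u i - a\<bar>"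
  using copula_mono_coord[where u = u and a = a and b = "u i" and i = i, OF C u]
      copula_increment_le[where u = u and a = a and b = "u i" and i = i, OF C u]
      copula_mono_coord[where u = u and a = "u i" and b = a and i = i, OF C u]
      copula_increment_le[where u = u and a = "u i" and b = a and i = i, OF C u] u[of i] a
  by (cases "a \<le> u i") (auto simp: abs_real_def)

lemma copula_lipschitz:
  fixes C :: "('d::finite \<Rightarrow> real) \<Rightarrow> real"
  assumes C: "is_copula C"
  shows "\<bar>C u - C v\<bar> \<le> (\<Sum>k\<in>UNIV. \<bar>u k - v k\<bar>)"
proof -
  define u' where "u' = (\<lambda>k. clamp01 (u k))"
  define v' where "v' = (\<lambda>k. clamp01 (v k))"
  have u': "\<And>k. 0 \<le> u' k \<and> u' k \<le> 1" and v': "\<And>k. 0 \<le> v' k \<and> v' k \<le> 1"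
    by (auto simp: u'_def v'_def clamp01_def)
  have "\<bar>C u' - C (\<lambda>k. if k \<in> J then v' k else u' k)\<bar> \<le> (\<Sum>k\<in>J. \<bar>u' k - v' k\<bar>)"
    if "finite J" for J
    using that
  proof (induction J rule: finite_induct)
    case (insert j J)
    define x where "x = (\<lambda>k. if k \<in> J then v' k else u' k)"
    have "\<bar>C x - C (x(j := v' j))\<bar> \<le> \<bar>x j - v' j\<bar>"
      by (rule copula_lipschitz_coord[OF C]) (use u' v' in \<open>auto simp: x_def\<close>)
    moreover have "x j = u' j"
      using insert.hyps by (simp add: x_def)
    moreover have "(\<lambda>k. if k \<in> insert j J then v' k else u' k) = x(j := v' j)"
      by (auto simp: x_def)
    ultimately show ?case
      using insert.IH insert.hyps unfolding x_def[symmetric] by (simp del: fun_upd_apply)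
  qed simp
  from this[of UNIV] have "\<bar>C u' - C v'\<bar> \<le> (\<Sum>k\<in>UNIV. \<bar>u' k - v' k\<bar>)"
    by simp
  also have "\<dots> \<le> (\<Sum>k\<in>UNIV. \<bar>u k - v k\<bar>)"
    by (intro sum_mono) (auto simp: u'_def v'_def clamp01_def)
  finally show ?thesis
    using is_copula_clamp[OF C, of u] is_copula_clamp[OF C, of v] by (simp add: u'_def v'_def)
qed

lemma copula_nonneg:
  fixes C :: "('d::finite \<Rightarrow> real) \<Rightarrow> real"
  assumes C: "is_copula C"
  shows "0 \<le> C u"
proof -
  define v where "v = (\<lambda>k. clamp01 (u k))"
  have v: "\<And>k. 0 \<le> v k \<and> v k \<le> 1"
    by (auto simp: v_def clamp01_def)
  fix i :: 'd
  have "C (v(i := 0)) = 0"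
    by (rule is_copula_grounded[OF C, of _ i]) (use v in auto)
  moreover have "C (v(i := 0)) \<le> C (v(i := v i))"
    by (rule copula_mono_coord[where u = v, OF C v]) (use v in auto)
  moreover have "C u = C v"
    unfolding v_def by (rule is_copula_clamp[OF C])
  ultimately show ?thesis
    by simp
qed

lemma copula_le_clamp01:
  fixes C :: "('d::finite \<Rightarrow> real) \<Rightarrow> real"
  assumes C: "is_copula C"
  shows "C u \<le> clamp01 (u i)"
proof -
  define v where "v = (\<lambda>k. clamp01 (u k))"
  have v: "\<And>k. 0 \<le> v k \<and> v k \<le> 1"
    by (auto simp: v_def clamp01_def)
  have "C (v(i := 0)) = 0"
    by (rule is_copula_grounded[OF C, of _ i]) (use v in auto)
  moreover have "C (v(i := v i)) - C (v(i := 0)) \<le> v i - 0"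
    by (rule copula_increment_le[where u = v, OF C v]) (use v in auto)
  moreover have "C u = C v"
    unfolding v_def by (rule is_copula_clamp[OF C])
  ultimately have "C u \<le> v i"
    by simp
  then show ?thesis
    by (simp add: v_def)
qed

lemma copula_le_one: "is_copula C \<Longrightarrow> C u \<le> 1"
  using copula_le_clamp01[of C u undefined] by (simp add: clamp01_def)

lemma copula_tendsto:
  fixes C :: "('d::finite \<Rightarrow> real) \<Rightarrow> real"
  assumes C: "is_copula C" and X: "\<And>i. ((\<lambda>z. X z i) \<longlongrightarrow> Y i) F"
  shows "((\<lambda>z. C (X z)) \<longlongrightarrow> C Y) F"
proof -
  have "((\<lambda>z. \<Sum>k\<in>UNIV. \<bar>X z k - Y k\<bar>) \<longlongrightarrow> 0) F"
    using X by (auto intro!: tendsto_null_sum tendsto_rabs_zero simp: LIM_zero_iff)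
  then have "((\<lambda>z. C (X z) - C Y) \<longlongrightarrow> 0) F"
    by (rule Lim_null_comparison[rotated]) (auto intro!: always_eventually copula_lipschitz[OF C])
  then show ?thesis
    by (simp add: LIM_zero_iff)
qed

lemma borel_measurable_copula:
  fixes C :: "('d::finite \<Rightarrow> real) \<Rightarrow> real"
  assumes C: "is_copula C"
  shows "C \<in> borel_measurable borel"
proof (rule borel_measurable_continuous_onI)
  have "((\<lambda>z. z i) \<longlongrightarrow> x i) (at x)" for x :: "'d \<Rightarrow> real" and i
    using continuous_on_product_coordinates[of i] unfolding continuous_on_def by blast
  then show "continuous_on UNIV C"
    unfolding continuous_on_def by (auto intro: copula_tendsto[OF C, where X = "\<lambda>z. z", simplified])
qed

lemma is_copula2_increment_bounds:
  assumes D: "is_copula2 D" and "x \<le> y"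
  shows "D x v \<le> D y v" and "D y v - D x v \<le> y - x"
proof -
  define x' y' v' where "x' = clamp01 x" and "y' = clamp01 y" and "v' = clamp01 v"
  have range: "0 \<le> x'" "x' \<le> y'" "y' \<le> 1" "0 \<le> v'" "v' \<le> 1" "y' - x' \<le> y - x"
    using \<open>x \<le> y\<close> by (auto simp: x'_def y'_def v'_def clamp01_def)
  have "D x v = D x' v'" "D y v = D y' v'"
    using D unfolding is_copula2_def x'_def y'_def v'_def by blast+
  moreover have "D y' 0 = 0" "D x' 0 = 0" "D y' 1 = y'" "D x' 1 = x'"
    using D range unfolding is_copula2_def by auto
  moreover have "0 \<le> D y' v' - D x' v' - D y' 0 + D x' 0"
    and "0 \<le> D y' 1 - D x' 1 - D y' v' + D x' v'"
    using D range unfolding is_copula2_def by (meson order_refl zero_le_one)+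
  ultimately show "D x v \<le> D y v" and "D y v - D x v \<le> y - x"
    using range by linarith+
qed

lemma is_copula2_continuous_on:
  assumes D: "is_copula2 D"
  shows "continuous_on UNIV (\<lambda>x. D x v)"
proof (rule lipschitz_on_continuous_on)
  have "dist (D x v) (D y v) \<le> 1 * dist x y" if "x \<le> y" for x y
    using is_copula2_increment_bounds[OF D that, of v] by (simp add: dist_real_def)
  then show "1-lipschitz_on UNIV (\<lambda>x. D x v)"
    by (intro lipschitz_onI) (metis dist_commute linear, simp)
qed

section \<open>Borel measurability of derivatives\<close>

lemma mono_imp_deriv_nonneg:
  fixes f :: "real \<Rightarrow> real"
  assumes "mono f" and "f differentiable (at t)"
  shows "0 \<le> deriv f t"
proof (rule ccontr)
  assume "\<not> 0 \<le> deriv f t"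
  moreover have "DERIV f t :> deriv f t"
    using assms(2) DERIV_deriv_iff_real_differentiable by blast
  ultimately obtain d where "d > 0" "\<forall>h>0. h < d \<longrightarrow> f (t + h) < f t"
    using DERIV_neg_dec_right by (metis not_le)
  moreover have "f t \<le> f (t + d / 2)"
    using \<open>d > 0\<close> \<open>mono f\<close> by (simp add: monoD)
  ultimately show False
    by (smt (verit) field_sum_of_halves)
qed

lemma le_on_open_if_le_on_Rats:
  fixes g :: "real \<Rightarrow> real"
  assumes "open U" "continuous_on U g" "\<And>y. y \<in> U \<Longrightarrow> y \<in> \<rat> \<Longrightarrow> g y \<le> e" "x \<in> U"
  shows "g x \<le> e"
proof -
  have "open (U \<inter> g -` {e<..})"
    using assms(1,2) by (intro continuous_open_preimage open_greaterThan)
  moreover have "(U \<inter> g -` {e<..}) \<inter> \<rat> = {}"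
    using assms(3) by fastforce
  ultimately have "U \<inter> g -` {e<..} = {}"
    using open_Int_closure_eq_empty Rats_closure_real by (metis Int_UNIV_right)
  then show ?thesis
    using \<open>x \<in> U\<close> by fastforce
qed

definition diff_quot :: "(real \<Rightarrow> real) \<Rightarrow> real \<Rightarrow> real \<Rightarrow> real" where
  "diff_quot f t h = (f (t + h) - f t) / h"

lemma differentiable_iff_cauchy_diff_quot:
  fixes f :: "real \<Rightarrow> real"
  shows "f differentiable (at t) \<longleftrightarrow> cauchy_filter (filtermap (diff_quot f t) (at 0))"
proof
  assume "f differentiable (at t)"
  then have "(diff_quot f t \<longlongrightarrow> deriv f t) (at 0)"
    unfolding diff_quot_def by (simp add: DERIV_deriv_iff_real_differentiable[symmetric] DERIV_def)
  then show "cauchy_filter (filtermap (diff_quot f t) (at 0))"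
    unfolding filterlim_def by (rule nhds_imp_cauchy_filter)
next
  assume "cauchy_filter (filtermap (diff_quot f t) (at 0))"
  moreover have "filtermap (diff_quot f t) (at (0::real)) \<noteq> bot"
    by (simp add: filtermap_bot_iff)
  ultimately obtain c where "(diff_quot f t \<longlongrightarrow> c) (at 0)"
    using cauchy_filter_complete_converges[OF _ complete_UNIV] unfolding filterlim_def by auto
  then show "f differentiable (at t)"
    unfolding diff_quot_def DERIV_def[symmetric] real_differentiable_def by blast
qed

definition rat_Cauchy_at_0 :: "(real \<Rightarrow> real) \<Rightarrow> bool" where
  "rat_Cauchy_at_0 g \<longleftrightarrow> (\<forall>n::nat. \<exists>m::nat. \<forall>q r :: rat.
     q \<noteq> 0 \<and> \<bar>of_rat q\<bar> < 1 / real (Suc m) \<and> r \<noteq> 0 \<and> \<bar>of_rat r\<bar> < 1 / real (Suc m) \<longrightarrow>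
     \<bar>g (of_rat q) - g (of_rat r)\<bar> \<le> 1 / real (Suc n))"

lemma cauchy_filter_at_0_imp_rat_Cauchy:
  fixes g :: "real \<Rightarrow> real"
  assumes cauchy: "cauchy_filter (filtermap g (at 0))"
  shows "rat_Cauchy_at_0 g"
  unfolding rat_Cauchy_at_0_def
proof (intro allI)
  fix n :: nat
  have "0 < 1 / real (Suc n)"
    by simp
  then obtain P where "eventually P (at 0)"
    and close: "\<And>x y. P x \<Longrightarrow> P y \<Longrightarrow> dist (g x) (g y) < 1 / real (Suc n)"
    using cauchy unfolding cauchy_filter_metric_filtermap by blast
  then obtain d where "d > 0" and P: "\<And>x. x \<noteq> 0 \<Longrightarrow> \<bar>x\<bar> < d \<Longrightarrow> P x"
    unfolding eventually_at by (auto simp: dist_real_def)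
  obtain m where m: "inverse (real (Suc m)) < d"
    using reals_Archimedean[OF \<open>d > 0\<close>] by blast
  show "\<exists>m. \<forall>q r :: rat.
     q \<noteq> 0 \<and> \<bar>of_rat q\<bar> < 1 / real (Suc m) \<and> r \<noteq> 0 \<and> \<bar>of_rat r\<bar> < 1 / real (Suc m) \<longrightarrow>
     \<bar>g (of_rat q) - g (of_rat r)\<bar> \<le> 1 / real (Suc n)"
  proof (intro exI[of _ m] allI impI)
    fix q r :: rat
    assume "q \<noteq> 0 \<and> \<bar>of_rat q\<bar> < 1 / real (Suc m) \<and> r \<noteq> 0 \<and> \<bar>of_rat r\<bar> < 1 / real (Suc m)"
    then have "P (of_rat q)" "P (of_rat r)"
      using P m by (simp_all add: inverse_eq_divide)
    then show "\<bar>g (of_rat q) - g (of_rat r)\<bar> \<le> 1 / real (Suc n)"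
      using close[of "of_rat q" "of_rat r"] by (simp add: dist_real_def)
  qed
qed

lemma abs_diff_le_on_open_if_le_on_Rats:
  fixes g :: "real \<Rightarrow> real"
  assumes U: "open U" and g: "continuous_on U g"
    and Rats: "\<And>x y. x \<in> U \<Longrightarrow> x \<in> \<rat> \<Longrightarrow> y \<in> U \<Longrightarrow> y \<in> \<rat> \<Longrightarrow> \<bar>g x - g y\<bar> \<le> e"
    and "x \<in> U" "y \<in> U"
  shows "\<bar>g x - g y\<bar> \<le> e"
proof -
  have Rats_right: "\<bar>g x' - g y'\<bar> \<le> e" if "x' \<in> U" "y' \<in> U" "y' \<in> \<rat>" for x' y'
    using U _ _ \<open>x' \<in> U\<close>
  proof (rule le_on_open_if_le_on_Rats)
    show "continuous_on U (\<lambda>x. \<bar>g x - g y'\<bar>)"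
      by (intro continuous_intros g)
  qed (use Rats that in blast)
  show ?thesis
    using U _ _ \<open>y \<in> U\<close>
  proof (rule le_on_open_if_le_on_Rats[where g = "\<lambda>y. \<bar>g x - g y\<bar>"])
    show "continuous_on U (\<lambda>y. \<bar>g x - g y\<bar>)"
      by (intro continuous_intros g)
  qed (use Rats_right \<open>x \<in> U\<close> in blast)
qed

lemma rat_Cauchy_imp_cauchy_filter_at_0:
  fixes g :: "real \<Rightarrow> real"
  assumes g: "continuous_on (- {0}) g" and R: "rat_Cauchy_at_0 g"
  shows "cauchy_filter (filtermap g (at 0))"
  unfolding cauchy_filter_metric_filtermap
proof (intro allI impI)
  fix e :: real
  assume "0 < e"
  obtain n where n: "inverse (real (Suc n)) < e"
    using reals_Archimedean[OF \<open>0 < e\<close>] by blast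
  obtain m where m: "\<forall>q r :: rat.
     q \<noteq> 0 \<and> \<bar>of_rat q\<bar> < 1 / real (Suc m) \<and> r \<noteq> 0 \<and> \<bar>of_rat r\<bar> < 1 / real (Suc m) \<longrightarrow>
     \<bar>g (of_rat q) - g (of_rat r)\<bar> \<le> 1 / real (Suc n)"
    using R unfolding rat_Cauchy_at_0_def by blast
  define U where "U = {x::real. x \<noteq> 0 \<and> \<bar>x\<bar> < 1 / real (Suc m)}"
  have "open U"
    unfolding U_def by (intro open_Collect_conj open_Collect_neq open_Collect_less continuous_intros)
  moreover have "continuous_on U g"
    using g by (rule continuous_on_subset) (auto simp: U_def)
  moreover have "\<bar>g x - g y\<bar> \<le> 1 / real (Suc n)" if "x \<in> U" "x \<in> \<rat>" "y \<in> U" "y \<in> \<rat>" for x y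
  proof -
    obtain q r where "x = of_rat q" "y = of_rat r"
      using \<open>x \<in> \<rat>\<close> \<open>y \<in> \<rat>\<close> by (metis Rats_cases)
    then show ?thesis
      using m that by (simp add: U_def)
  qed
  ultimately have U_close: "\<bar>g x - g y\<bar> \<le> 1 / real (Suc n)" if "x \<in> U" "y \<in> U" for x y
    using abs_diff_le_on_open_if_le_on_Rats that by blast
  show "\<exists>P. eventually P (at 0) \<and> (\<forall>x y. P x \<and> P y \<longrightarrow> dist (g x) (g y) < e)"
  proof (intro exI conjI allI impI)
    show "eventually (\<lambda>x. x \<in> U) (at 0)"
      unfolding eventually_at U_def by (intro exI[of _ "1 / real (Suc m)"]) (simp add: dist_real_def)
    fix x y
    assume "x \<in> U \<and> y \<in> U"
    then show "dist (g x) (g y) < e"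
      using U_close[of x y] n by (simp add: dist_real_def inverse_eq_divide)
  qed
qed

lemma borel_measurable_deriv_or_zero:
  fixes f :: "real \<Rightarrow> real"
  assumes f: "continuous_on UNIV f"
  shows "(\<lambda>t. if f differentiable (at t) then deriv f t else 0) \<in> borel_measurable borel"
proof -
  have [measurable]: "f \<in> borel_measurable borel"
    using f by (rule borel_measurable_continuous_onI)
  have "continuous_on (- {0}) (diff_quot f t)" for t
    unfolding diff_quot_def by (intro continuous_intros continuous_on_compose2[OF f]) auto
  then have diff_iff: "f differentiable (at t) \<longleftrightarrow> rat_Cauchy_at_0 (diff_quot f t)" for t
    using differentiable_iff_cauchy_diff_quot cauchy_filter_at_0_imp_rat_Cauchy
      rat_Cauchy_imp_cauchy_filter_at_0 by blast
  define D where "D = {t. f differentiable (at t)}"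
  have deriv_eq_lim: "deriv f t = lim (\<lambda>k. diff_quot f t (1 / real (Suc k)))" if "t \<in> D" for t
  proof -
    have "(diff_quot f t \<longlongrightarrow> deriv f t) (at 0)"
      using that unfolding D_def diff_quot_def
      by (simp add: DERIV_deriv_iff_real_differentiable[symmetric] DERIV_def)
    moreover have "filterlim (\<lambda>k. 1 / real (Suc k)) (at 0) sequentially"
      unfolding filterlim_at using LIMSEQ_inverse_real_of_nat by (simp add: inverse_eq_divide)
    ultimately show ?thesis
      by (metis filterlim_compose limI)
  qed
  have "D \<in> sets borel"
    unfolding D_def diff_iff rat_Cauchy_at_0_def diff_quot_def by measurable
  moreover have "(\<lambda>t. lim (\<lambda>k. diff_quot f t (1 / real (Suc k)))) \<in> borel_measurable borel"
    unfolding diff_quot_def by measurable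
  ultimately have "(\<lambda>t. if t \<in> D then lim (\<lambda>k. diff_quot f t (1 / real (Suc k))) else 0)
      \<in> borel_measurable borel"
    by (intro measurable_If_set) auto
  also have "(\<lambda>t. if t \<in> D then lim (\<lambda>k. diff_quot f t (1 / real (Suc k))) else 0) =
      (\<lambda>t. if f differentiable (at t) then deriv f t else 0)"
    using deriv_eq_lim by (auto simp: D_def)
  finally show ?thesis .
qed

section \<open>Rescaling the integral defining phiC\<close>

lemma partial1_nonneg: "is_copula2 D \<Longrightarrow> 0 \<le> partial1 D t v"
  unfolding partial1_def
  by (auto intro!: mono_imp_deriv_nonneg monoI dest: is_copula2_increment_bounds(1))

lemma borel_measurable_partial1: "is_copula2 D \<Longrightarrow> (\<lambda>t. partial1 D t v) \<in> borel_measurable borel"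
  unfolding partial1_def by (intro borel_measurable_deriv_or_zero is_copula2_continuous_on)

lemma borel_measurable_copula_partial1:
  fixes C :: "('d::finite \<Rightarrow> real) \<Rightarrow> real"
  assumes C: "is_copula C" and Cs: "\<And>i. is_copula2 (Cs i)"
  shows "(\<lambda>t. C (\<lambda>i. partial1 (Cs i) (a * t) (v i))) \<in> borel_measurable borel"
proof -
  have "(\<lambda>t. partial1 (Cs i) (a * t) (v i)) \<in> borel_measurable borel" for i
    by (rule measurable_compose[OF _ borel_measurable_partial1[OF Cs]]) measurable
  then have "(\<lambda>t i. partial1 (Cs i) (a * t) (v i)) \<in> borel_measurable borel"
    by (rule measurable_coordinatewise_then_product)
  then show ?thesis
    by (rule measurable_compose[OF _ borel_measurable_copula[OF C]])
qed

text \<open>The integrand of \<^term>\<open>phiC C Cs (\<lambda>i. s * w i) / s\<close> after substituting \<open>t = s * \<tau>\<close>.\<close>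

definition phiC_scaled ::
    "(('d::finite \<Rightarrow> real) \<Rightarrow> real) \<Rightarrow> ('d \<Rightarrow> real \<Rightarrow> real \<Rightarrow> real) \<Rightarrow> ('d \<Rightarrow> real) \<Rightarrow>
      real \<Rightarrow> real \<Rightarrow> ennreal"
  where "phiC_scaled C Cs w s \<tau> =
    ennreal (indicator {0..1} (s * \<tau>) * C (\<lambda>i. partial1 (Cs i) (s * \<tau>) (s * w i)))"

lemma nn_integral_phiC_scaled:
  fixes C :: "('d::finite \<Rightarrow> real) \<Rightarrow> real"
  assumes C: "is_copula C" and Cs: "\<And>i. is_copula2 (Cs i)" and "0 < s"
  shows "(\<integral>\<^sup>+ \<tau>. phiC_scaled C Cs w s \<tau> \<partial>lborel) = ennreal (phiC C Cs (\<lambda>i. s * w i) / s)"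
proof -
  define h where "h t = indicator {0..1} t * C (\<lambda>i. partial1 (Cs i) t (s * w i))" for t :: real
  have h_meas: "h \<in> borel_measurable borel"
    unfolding h_def using borel_measurable_copula_partial1[OF C Cs, where a = 1] by simp
  have h_bounds: "0 \<le> h t" "h t \<le> indicator {0..1} t" for t
    using copula_nonneg[OF C] copula_le_one[OF C] by (auto simp: h_def indicator_def)
  have "integrable lborel h"
    by (rule Bochner_Integration.integrable_bound[OF integrable_real_indicator[of "{0..1::real}"]])
      (use h_meas h_bounds in auto)
  moreover have "phiC C Cs (\<lambda>i. s * w i) = integral\<^sup>L lborel h"
    unfolding phiC_def set_lebesgue_integral_def h_def by simp
  ultimately have "ennreal (phiC C Cs (\<lambda>i. s * w i)) = (\<integral>\<^sup>+ t. ennreal (h t) \<partial>lborel)"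
    using h_bounds by (simp add: nn_integral_eq_integral)
  also have "\<dots> = ennreal s * (\<integral>\<^sup>+ \<tau>. ennreal (h (0 + s * \<tau>)) \<partial>lborel)"
    using nn_integral_real_affine[of "\<lambda>t. ennreal (h t)" s 0] h_meas \<open>0 < s\<close> by simp
  finally have scaled:
      "ennreal (phiC C Cs (\<lambda>i. s * w i)) = ennreal s * (\<integral>\<^sup>+ \<tau>. phiC_scaled C Cs w s \<tau> \<partial>lborel)"
    by (simp add: h_def phiC_scaled_def)
  have "ennreal (phiC C Cs (\<lambda>i. s * w i) / s) = ennreal (phiC C Cs (\<lambda>i. s * w i)) * ennreal (inverse s)"
    using \<open>0 < s\<close> by (simp add: divide_inverse ennreal_mult'')
  also have "\<dots> = (\<integral>\<^sup>+ \<tau>. phiC_scaled C Cs w s \<tau> \<partial>lborel) * (ennreal s * ennreal (inverse s))"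
    by (simp add: scaled mult_ac)
  also have "ennreal s * ennreal (inverse s) = 1"
    using \<open>0 < s\<close> by (simp flip: ennreal_mult)
  finally show ?thesis
    by simp
qed

lemma AE_tendsto_phiC_scaled:
  fixes C :: "('d::finite \<Rightarrow> real) \<Rightarrow> real"
  assumes C: "is_copula C"
    and conv: "\<And>i. AE t in lborel. 0 \<le> t \<longrightarrow>
      ((\<lambda>s. partial1 (Cs i) (s * t) (s * w i)) \<longlongrightarrow> partial1 (Ls i) t (w i)) (at_right 0)"
    and s: "filterlim s (at_right 0) sequentially"
  shows "AE \<tau> in lborel. (\<lambda>n. phiC_scaled C Cs w (s n) \<tau>) \<longlonglongrightarrow>
    ennreal (C (\<lambda>i. partial1 (Ls i) \<tau> (w i))) * indicator {0..} \<tau>"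
proof -
  have s_pos: "eventually (\<lambda>n. 0 < s n) sequentially" and "s \<longlonglongrightarrow> 0"
    using s unfolding filterlim_at by (auto elim: eventually_mono)
  have "AE \<tau> in lborel. \<forall>i\<in>UNIV. 0 \<le> \<tau> \<longrightarrow>
      ((\<lambda>s. partial1 (Cs i) (s * \<tau>) (s * w i)) \<longlongrightarrow> partial1 (Ls i) \<tau> (w i)) (at_right 0)"
    by (rule AE_finite_allI) (simp_all add: conv)
  then show ?thesis
  proof eventually_elim
    case (elim \<tau>)
    show ?case
    proof (cases "0 \<le> \<tau>")
      case False
      have "eventually (\<lambda>n. phiC_scaled C Cs w (s n) \<tau> = 0) sequentially"
        using s_pos by eventually_elim (use False in \<open>simp add: phiC_scaled_def indicator_def zero_le_mult_iff\<close>)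
      then show ?thesis
        using False by (simp add: tendsto_eventually)
    next
      case True
      have "(\<lambda>n. C (\<lambda>i. partial1 (Cs i) (s n * \<tau>) (s n * w i))) \<longlonglongrightarrow> C (\<lambda>i. partial1 (Ls i) \<tau> (w i))"
        using elim True by (intro copula_tendsto[OF C] filterlim_compose[OF _ s]) auto
      then have "(\<lambda>n. ennreal (C (\<lambda>i. partial1 (Cs i) (s n * \<tau>) (s n * w i)))) \<longlonglongrightarrow>
          ennreal (C (\<lambda>i. partial1 (Ls i) \<tau> (w i)))"
        by (rule tendsto_ennrealI)
      moreover have "(\<lambda>n. s n * \<tau>) \<longlonglongrightarrow> 0"
        using \<open>s \<longlonglongrightarrow> 0\<close> by (rule tendsto_mult_left_zero)
      then have "eventually (\<lambda>n. s n * \<tau> < 1) sequentially"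
        by (rule order_tendstoD) simp
      with s_pos have "eventually (\<lambda>n. ennreal (C (\<lambda>i. partial1 (Cs i) (s n * \<tau>) (s n * w i))) =
          phiC_scaled C Cs w (s n) \<tau>) sequentially"
        by eventually_elim (use True in \<open>simp add: phiC_scaled_def indicator_def\<close>)
      ultimately show ?thesis
        using True by (simp add: Lim_transform_eventually)
    qed
  qed
qed

lemma borel_measurable_phiC_scaled:
  fixes C :: "('d::finite \<Rightarrow> real) \<Rightarrow> real"
  assumes C: "is_copula C" and Cs: "\<And>i. is_copula2 (Cs i)"
  shows "phiC_scaled C Cs w s \<in> borel_measurable borel"
proof -
  have [measurable]: "(\<lambda>\<tau>. C (\<lambda>i. partial1 (Cs i) (s * \<tau>) (s * w i))) \<in> borel_measurable borel"
    by (rule borel_measurable_copula_partial1[OF C Cs])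
  show ?thesis
    unfolding phiC_scaled_def[abs_def] by measurable
qed

text \<open>Stated with a liminf so that the integrand is measurable without any regularity of \<^term>\<open>Ls\<close>.\<close>

lemma phiL_eq_nn_integral_liminf:
  fixes C :: "('d::finite \<Rightarrow> real) \<Rightarrow> real"
  assumes C: "is_copula C"
    and conv: "\<And>i. AE t in lborel. 0 \<le> t \<longrightarrow>
      ((\<lambda>s. partial1 (Cs i) (s * t) (s * w i)) \<longlongrightarrow> partial1 (Ls i) t (w i)) (at_right 0)"
    and s: "filterlim s (at_right 0) sequentially"
  shows "phiL C Ls w = (\<integral>\<^sup>+ \<tau>. liminf (\<lambda>n. phiC_scaled C Cs w (s n) \<tau>) \<partial>lborel)"
  unfolding phiL_def
proof (rule nn_integral_cong_AE)
  show "AE \<tau> in lborel. ennreal (C (\<lambda>i. partial1 (Ls i) \<tau> (w i))) * indicator {0..} \<tau> =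
      liminf (\<lambda>n. phiC_scaled C Cs w (s n) \<tau>)"
    using AE_tendsto_phiC_scaled[where Cs = Cs and Ls = Ls and w = w, OF C conv s]
    by eventually_elim (simp add: lim_imp_Liminf)
qed

lemma tendsto_nn_integral_phiC_scaled:
  fixes C :: "('d::finite \<Rightarrow> real) \<Rightarrow> real"
  assumes C: "is_copula C" and Cs: "\<And>i. is_copula2 (Cs i)"
    and L: "is_tdf (phiC C Cs) L" and w: "\<And>i. 0 \<le> w i"
    and s: "filterlim s (at_right 0) sequentially" and s_pos: "\<And>n. 0 < s n"
  shows "(\<lambda>n. \<integral>\<^sup>+ \<tau>. phiC_scaled C Cs w (s n) \<tau> \<partial>lborel) \<longlonglongrightarrow> ennreal (L w)"
proof -
  have "((\<lambda>s. phiC C Cs (\<lambda>i. s * w i) / s) \<longlongrightarrow> L w) (at_right 0)"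
    using L w unfolding is_tdf_def by blast
  then have "(\<lambda>n. ennreal (phiC C Cs (\<lambda>i. s n * w i) / s n)) \<longlonglongrightarrow> ennreal (L w)"
    by (intro tendsto_ennrealI filterlim_compose[OF _ s])
  then show ?thesis
    by (simp add: nn_integral_phiC_scaled[OF C Cs s_pos])
qed

lemma filterlim_inverse_Suc_divide_at_right_0:
  assumes "0 < c"
  shows "filterlim (\<lambda>n. 1 / real (Suc n) / c) (at_right 0) sequentially"
proof (rule tendsto_imp_filterlim_at_right)
  show "(\<lambda>n. 1 / real (Suc n) / c) \<longlonglongrightarrow> 0"
    using LIMSEQ_Suc[OF lim_const_over_n[of "1 / c"]] by (simp add: mult.commute)
qed (use assms in simp)

lemma phiL_le_tdf:
  fixes C :: "('d::finite \<Rightarrow> real) \<Rightarrow> real"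
  assumes C: "is_copula C" and Cs: "\<And>i. is_copula2 (Cs i)"
    and L: "is_tdf (phiC C Cs) L" and w: "\<And>i. 0 \<le> w i"
    and conv: "\<And>i. AE t in lborel. 0 \<le> t \<longrightarrow>
      ((\<lambda>s. partial1 (Cs i) (s * t) (s * w i)) \<longlongrightarrow> partial1 (Ls i) t (w i)) (at_right 0)"
  shows "phiL C Ls w \<le> ennreal (L w)"
proof -
  define s where "s n = 1 / real (Suc n)" for n
  have s: "filterlim s (at_right 0) sequentially"
    using filterlim_inverse_Suc_divide_at_right_0[of 1] by (simp add: s_def[abs_def])
  have "phiL C Ls w = (\<integral>\<^sup>+ \<tau>. liminf (\<lambda>n. phiC_scaled C Cs w (s n) \<tau>) \<partial>lborel)"
    by (rule phiL_eq_nn_integral_liminf[where Cs = Cs and Ls = Ls and w = w, OF C conv s])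
  also have "\<dots> \<le> liminf (\<lambda>n. \<integral>\<^sup>+ \<tau>. phiC_scaled C Cs w (s n) \<tau> \<partial>lborel)"
    by (rule nn_integral_liminf) (simp add: borel_measurable_phiC_scaled[OF C Cs])
  also have "\<dots> = ennreal (L w)"
    by (rule lim_imp_Liminf[OF _ tendsto_nn_integral_phiC_scaled[OF C Cs L w s]]) (simp_all add: s_def)
  finally show ?thesis .
qed

lemma integrable_Ici_rescale:
  fixes f :: "real \<Rightarrow> real"
  assumes f: "set_integrable lborel {0..} f" and "0 < c"
  shows "integrable lborel (\<lambda>\<tau>. indicator {0..} \<tau> * f (\<tau> / c))"
proof -
  have "integrable lborel (\<lambda>\<tau>. indicator {0..} (0 + inverse c * \<tau>) *\<^sub>R f (0 + inverse c * \<tau>))"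
    using f \<open>0 < c\<close> unfolding set_integrable_def by (intro lborel_integrable_real_affine) auto
  moreover have "indicator {0..} (inverse c * \<tau>) = (indicator {0..} \<tau> :: real)" for \<tau>
    using \<open>0 < c\<close> by (simp add: indicator_def zero_le_mult_iff)
  ultimately show ?thesis
    by (simp add: divide_inverse mult.commute)
qed

lemma phiC_scaled_le_partial1:
  fixes C :: "('d::finite \<Rightarrow> real) \<Rightarrow> real"
  assumes C: "is_copula C" and Cs: "\<And>i. is_copula2 (Cs i)" and "0 < \<sigma>" "0 < c"
  shows "phiC_scaled C Cs w (\<sigma> / c) \<tau> \<le>
    ennreal (partial1 (Cs l) (\<sigma> * (\<tau> / c)) (\<sigma> * (w l / c)) * indicator {0..1 / \<sigma>} (\<tau> / c))"
proof -
  have "indicator {0..1} (\<sigma> / c * \<tau>) = (indicator {0..1 / \<sigma>} (\<tau> / c) :: real)"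
    using \<open>0 < \<sigma>\<close> \<open>0 < c\<close> by (simp add: indicator_def zero_le_mult_iff field_simps)
  moreover have "C (\<lambda>i. partial1 (Cs i) (\<sigma> / c * \<tau>) (\<sigma> / c * w i)) \<le>
      partial1 (Cs l) (\<sigma> * (\<tau> / c)) (\<sigma> * (w l / c))"
    using copula_le_clamp01[OF C, of "\<lambda>i. partial1 (Cs i) (\<sigma> / c * \<tau>) (\<sigma> / c * w i)" l]
      partial1_nonneg[OF Cs, of l "\<sigma> / c * \<tau>" "\<sigma> / c * w l"]
    by (simp add: clamp01_def)
  ultimately show ?thesis
    unfolding phiC_scaled_def by (intro ennreal_leI) (simp add: indicator_def)
qed

lemma phiL_eq_tdf_if_dominated:
  fixes C :: "('d::finite \<Rightarrow> real) \<Rightarrow> real"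
  assumes C: "is_copula C" and Cs: "\<And>i. is_copula2 (Cs i)"
    and L: "is_tdf (phiC C Cs) L" and w: "\<And>i. 0 \<le> w i"
    and conv: "\<And>i. AE t in lborel. 0 \<le> t \<longrightarrow>
      ((\<lambda>s. partial1 (Cs i) (s * t) (s * w i)) \<longlongrightarrow> partial1 (Ls i) t (w i)) (at_right 0)"
    and g_int: "\<And>v. v \<in> {0..1} \<Longrightarrow> set_integrable lborel {0..} (g v)"
    and g_bound: "\<And>v \<sigma> \<tau>. v \<in> {0..1} \<Longrightarrow> \<sigma> \<in> {0<..1} \<Longrightarrow> 0 \<le> \<tau> \<Longrightarrow>
      partial1 (Cs l) (\<sigma> * \<tau>) (\<sigma> * v) * indicator {0..1 / \<sigma>} \<tau> \<le> g v \<tau>"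
  shows "phiL C Ls w = ennreal (L w)"
proof -
  \<comment> \<open>The bound on g holds only for arguments in [0,1], so w l is rescaled by c.\<close>
  define c where "c = max 1 (w l)"
  define s where "s n = 1 / real (Suc n) / c" for n
  have "0 < c" and v: "w l / c \<in> {0..1}"
    using w[of l] by (auto simp: c_def field_simps)
  have s: "filterlim s (at_right 0) sequentially"
    unfolding s_def[abs_def] using \<open>0 < c\<close> by (rule filterlim_inverse_Suc_divide_at_right_0)
  have s_pos: "0 < s n" for n
    using \<open>0 < c\<close> by (simp add: s_def)
  define G where "G \<tau> = indicator {0..} \<tau> * g (w l / c) (\<tau> / c)" for \<tau>
  have "integrable lborel G"
    unfolding G_def[abs_def] using g_int[OF v] \<open>0 < c\<close> by (rule integrable_Ici_rescale)
  then have G_meas: "G \<in> borel_measurable borel" and G_finite: "(\<integral>\<^sup>+ \<tau>. ennreal (G \<tau>) \<partial>lborel) < \<infinity>"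
    by (auto simp: less_top)
  have dominated: "phiC_scaled C Cs w (s n) \<tau> \<le> ennreal (G \<tau>)" for n \<tau>
  proof -
    have "1 / real (Suc n) \<in> {0<..1}"
      by simp
    then show ?thesis
      using phiC_scaled_le_partial1[where Cs = Cs and w = w and \<tau> = \<tau> and l = l and \<sigma> = "1 / real (Suc n)",
          OF C Cs _ \<open>0 < c\<close>] g_bound[OF v, of "1 / real (Suc n)" "\<tau> / c"] \<open>0 < c\<close>
      by (cases "0 \<le> \<tau>") (auto simp: s_def G_def indicator_def zero_le_divide_iff intro: order_trans ennreal_leI)
  qed
  have "(\<lambda>n. \<integral>\<^sup>+ \<tau>. phiC_scaled C Cs w (s n) \<tau> \<partial>lborel) \<longlonglongrightarrow>
      (\<integral>\<^sup>+ \<tau>. liminf (\<lambda>n. phiC_scaled C Cs w (s n) \<tau>) \<partial>lborel)"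
  proof (rule nn_integral_dominated_convergence[where w = "\<lambda>\<tau>. ennreal (G \<tau>)"])
    show "AE \<tau> in lborel. (\<lambda>n. phiC_scaled C Cs w (s n) \<tau>) \<longlonglongrightarrow> liminf (\<lambda>n. phiC_scaled C Cs w (s n) \<tau>)"
      using AE_tendsto_phiC_scaled[where Cs = Cs and Ls = Ls and w = w, OF C conv s]
      by eventually_elim (simp add: lim_imp_Liminf)
  qed (use G_meas G_finite dominated borel_measurable_phiC_scaled[OF C Cs] in simp_all)
  moreover have "(\<lambda>n. \<integral>\<^sup>+ \<tau>. phiC_scaled C Cs w (s n) \<tau> \<partial>lborel) \<longlonglongrightarrow> ennreal (L w)"
    by (rule tendsto_nn_integral_phiC_scaled[OF C Cs L w s s_pos])
  ultimately show ?thesis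
    using phiL_eq_nn_integral_liminf[where Cs = Cs and Ls = Ls and w = w, OF C conv s]
    by (metis LIMSEQ_unique)
qed

theorem mainTheorem4:
  fixes C :: "('d::finite \<Rightarrow> real) \<Rightarrow> real"
    and Cs :: "'d \<Rightarrow> real \<Rightarrow> real \<Rightarrow> real"
    and Ls :: "'d \<Rightarrow> real \<Rightarrow> real \<Rightarrow> real"
    and L :: "('d \<Rightarrow> real) \<Rightarrow> real"
  assumes C: "is_copula C"
    and Cs: "\<And>i. is_copula2 (Cs i)"
    and Ls: "\<And>i. is_tdf2 (Cs i) (Ls i)"
    and L: "is_tdf (phiC C Cs) L"
    and conv: "\<And>i w. 0 \<le> w \<Longrightarrow> AE t in lborel. 0 \<le> t \<longrightarrow>
                 ((\<lambda>s. partial1 (Cs i) (s * t) (s * w)) \<longlongrightarrow> partial1 (Ls i) t w) (at_right 0)"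
  shows "(\<forall>w. (\<forall>i. 0 \<le> w i) \<longrightarrow> phiL C Ls w \<le> ennreal (L w)) \<and>
         ((\<exists>l. \<exists>g :: real \<Rightarrow> real \<Rightarrow> real.
             (\<forall>w\<in>{0..1}. set_integrable lborel {0..} (g w)) \<and>
             (\<forall>w\<in>{0..1}. \<forall>s\<in>{0<..1}. \<forall>\<tau>\<ge>0.
                 partial1 (Cs l) (s * \<tau>) (s * w) * indicator {0..1/s} \<tau> \<le> g w \<tau>))
          \<longrightarrow> (\<forall>w. (\<forall>i. 0 \<le> w i) \<longrightarrow> phiL C Ls w = ennreal (L w)))"
proof (intro conjI allI impI)
  fix w :: "'d \<Rightarrow> real"
  assume "\<forall>i. 0 \<le> w i"
  then show "phiL C Ls w \<le> ennreal (L w)"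
    by (intro phiL_le_tdf[where Cs = Cs and Ls = Ls, OF C Cs L]) (simp_all add: conv)
next
  fix w :: "'d \<Rightarrow> real"
  assume "\<exists>l. \<exists>g :: real \<Rightarrow> real \<Rightarrow> real.
      (\<forall>w\<in>{0..1}. set_integrable lborel {0..} (g w)) \<and>
      (\<forall>w\<in>{0..1}. \<forall>s\<in>{0<..1}. \<forall>\<tau>\<ge>0.
        partial1 (Cs l) (s * \<tau>) (s * w) * indicator {0..1/s} \<tau> \<le> g w \<tau>)"
    and w: "\<forall>i. 0 \<le> w i"
  then obtain l and g :: "real \<Rightarrow> real \<Rightarrow> real"
    where "\<forall>w\<in>{0..1}. set_integrable lborel {0..} (g w)"
      and "\<forall>w\<in>{0..1}. \<forall>s\<in>{0<..1}. \<forall>\<tau>\<ge>0.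
        partial1 (Cs l) (s * \<tau>) (s * w) * indicator {0..1/s} \<tau> \<le> g w \<tau>"
    by blast
  then show "phiL C Ls w = ennreal (L w)"
    by (intro phiL_eq_tdf_if_dominated[where Cs = Cs and Ls = Ls and g = g and l = l, OF C Cs L])
      (simp_all add: conv w)
qed

end
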